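(* Let $A\in\mathbb{R}^{m\times n}$ have full row rank, $c\in\mathbb{R}^m$, and fix a block size $\tau$ with $m+1\le\tau\le n$; let $\mathcal{B}$ be the set of all subsets $b\subseteq\{1,\dots,n\}$ with $|b|=\tau$. Consider $\min\{F(x):=f(x)+h(x): Ax=c\}$, where $f:\mathbb{R}^n\to\mathbb{R}$ is differentiable and $h(x)=\sum_i h_i(x_i)$ with each $h_i:\mathbb{R}\to\mathbb{R}\cup\{+\infty\}$ proper and convex. Assume there is $L_2>0$ such that for every $x$ with $Ax=c$, every $b\in\mathcal{B}$ and every $d$ with $\mathrm{supp}(d)\subseteq b$ and $Ad=0$, $\|\nabla_b f(x+d)-\nabla_bf(x)\|_2\le L_2\|d\|_2$. Let $F^*=\inf\{F(x):Ax=c\}$ and assume there is $\mu_2>0$ such that for all $x$ with $Ax=c$, $h(x)<\infty$, \[ -L_2\min_{d:\ Ad=0}\Big\{\nabla f(x)^\top d+\tfrac{L_2}{2}\|d\|_2^2+h(x+d)-h(x)\Big\}\ge\mu_2\,(F(x)-F^* ). \] Let $x^0$ satisfy $Ax^0=c$, $h(x^0)<\infty$, and set $x^{k+1}=x^k+d^k$ where $(b^k,d^k)$ minimizes $\nabla f(x^k)^\top d+\frac{L_2}{2}\|d\|_2^2+h(x^k+d)-h(x^k)$ over all $b\in\mathcal{B}$ and all $d$ with $\mathrm{supp}(d)\subseteq b$ and $Ad=0$ (the GS-q rule). Then for all $k\ge0$, \[ F(x^k)-F^*\le\Big(1-\frac{\mu_2}{L_2(n-\tau+1)}\Big)^k\big(F(x^0)-F^*\big).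 \]
   Context: $\mathrm{supp}(d)=\{i:d_i\ne0\}$; $\nabla_b f$ denotes the vector of partial derivatives of $f$ with indices in $b$. The displayed assumption on $\mu_2$ is the proximal-PL condition in the 2-norm, $\frac12\mathcal{D}(x,L_2)\ge\mu_2(F(x)-F^* )$ with $\mathcal{D}(x,L)=-2L\min_{d:Ad=0}\{\nabla f(x)^\top d+\frac L2\|d\|_2^2+h(x+d)-h(x)\}$. *)

theory Defs
  imports "HOL-Analysis.Analysis" "HOL-Library.Extended_Real"
begin

definition supp :: "real^'n \<Rightarrow> 'n set" where
  "supp d = {i. d $ i \<noteq> 0}"

text \<open>Proper convex extended-valued function real to real union {+infinity}
  (values in ereal, never -infinity, not identically +infinity; convexity in
  the extended sense with the convention 0 * infinity = 0).\<close>
definition proper_convex_ext :: "(real \<Rightarrow> ereal) \<Rightarrow> bool" where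
  "proper_convex_ext \<phi> \<longleftrightarrow>
     (\<forall>t. \<phi> t \<noteq> -\<infinity>) \<and> (\<exists>t. \<phi> t \<noteq> \<infinity>) \<and>
     (\<forall>s t u. 0 \<le> u \<and> u \<le> 1 \<longrightarrow>
        \<phi> ((1 - u) * s + u * t) \<le> ereal (1 - u) * \<phi> s + ereal u * \<phi> t)"

definition hsep :: "('n::finite \<Rightarrow> real \<Rightarrow> ereal) \<Rightarrow> real^'n \<Rightarrow> ereal" where
  "hsep hi x = (\<Sum>i\<in>UNIV. hi i (x $ i))"

definition model :: "(real^'n \<Rightarrow> real^'n) \<Rightarrow> (real^'n \<Rightarrow> ereal) \<Rightarrow> real
                     \<Rightarrow> real^'n \<Rightarrow> real^'n \<Rightarrow> ereal" where
  "model g h L x d = ereal (g x \<bullet> d + L / 2 * (norm d)\<^sup>2) + h (x + d) - h x"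

end

theory Submission
  imports Defs
begin

text \<open>
  Call vectors \<open>a\<close>, \<open>b\<close> conformal if \<open>a\<^sub>i b\<^sub>i \<ge> 0\<close> for every \<open>i\<close>. Every null vector \<open>v\<close>
  of \<open>A\<close> contains a conformal null vector with at most \<open>m + 1 \<le> \<tau>\<close> nonzero entries, and
  subtracting a suitable multiple of it removes a coordinate from the support of \<open>v\<close> while
  staying conformal. Along conformal sums the model \<open>\<nabla>f(x)\<^sup>T d + L/2 \<parallel>d\<parallel>\<^sup>2 + h(x + d) - h(x)\<close>
  is superadditive (cross terms of the square are nonnegative, and each \<open>h\<^sub>i\<close> is convex in one
  variable), so peeling off such pieces shows that the best step on a \<open>\<tau>\<close>-block decreases the
  model by at least \<open>1 / (n - \<tau> + 1)\<close> of the full minimum over the null space. The block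
  descent lemma and the proximal-PL inequality then give the contraction factor
  \<open>1 - \<mu> / (L (n - \<tau> + 1))\<close> per step.
\<close>

definition conformal :: "real^'n \<Rightarrow> real^'n \<Rightarrow> bool" where
  "conformal a b \<longleftrightarrow> (\<forall>i. 0 \<le> a $ i * b $ i)"

lemma conformal_refl: "conformal a a"
  by (simp add: conformal_def)

lemma conformal_commute: "conformal a b \<longleftrightarrow> conformal b a"
  by (simp add: conformal_def mult.commute)

lemma conformal_scaleR: "0 \<le> t \<Longrightarrow> conformal a b \<Longrightarrow> conformal (t *\<^sub>R a) b"
  by (simp add: conformal_def mult.assoc)

lemma conformal_trans:
  assumes "conformal a b" "conformal b c" "supp a \<inter> supp c \<subseteq> supp b"
  shows "conformal a c"
  unfolding conformal_def
proof
  fix i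
  show "0 \<le> a $ i * c $ i"
  proof (cases "b $ i = 0")
    case True
    with assms(3) have "a $ i = 0 \<or> c $ i = 0" by (auto simp: supp_def)
    then show ?thesis by auto
  next
    case False
    have "0 \<le> (a $ i * b $ i) * (b $ i * c $ i)"
      using assms(1,2) by (simp add: conformal_def)
    then have "0 \<le> (a $ i * c $ i) * (b $ i)\<^sup>2"
      by (simp add: algebra_simps power2_eq_square)
    with False show ?thesis
      by (simp add: zero_le_mult_iff)
  qed
qed

lemma supp_zero [simp]: "supp 0 = {}"
  by (simp add: supp_def)

lemma supp_scaleR: "t \<noteq> 0 \<Longrightarrow> supp (t *\<^sub>R a) = supp a"
  by (simp add: supp_def)

lemma supp_eq_empty_iff: "supp a = {} \<longleftrightarrow> a = 0"
  by (auto simp: supp_def vec_eq_iff)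

text \<open>Moving from \<open>v\<close> along \<open>-w\<close> up to the first coordinate where \<open>v\<close> hits zero
  keeps every coordinate on its side of zero.\<close>
lemma conformal_ratio_step:
  fixes v w :: "real^'n::finite"
  assumes "0 < w $ j * v $ j"
  obtains t i where "0 < t" "conformal (v - t *\<^sub>R w) v" "(v - t *\<^sub>R w) $ i = 0" "i \<in> supp v"
proof -
  define P where "P = {i. 0 < w $ i * v $ i}"
  define t where "t = Min ((\<lambda>i. v $ i / w $ i) ` P)"
  have P: "finite P" "j \<in> P"
    using assms by (auto simp: P_def)
  have "t \<in> (\<lambda>i. v $ i / w $ i) ` P"
    unfolding t_def using P by (intro Min_in) auto
  then obtain i where i: "i \<in> P" "t = v $ i / w $ i"
    by blast
  have t_le: "t \<le> v $ k / w $ k" if "k \<in> P" for k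
    unfolding t_def using P that by simp
  have t_pos: "0 < t"
    using i by (auto simp: P_def zero_less_divide_iff zero_less_mult_iff)
  have "0 \<le> (v $ k - t * w $ k) * v $ k" for k
  proof (cases "k \<in> P")
    case True
    then have "w $ k \<noteq> 0" "0 < w $ k * v $ k"
      by (auto simp: P_def)
    then have "t * w $ k * v $ k \<le> v $ k / w $ k * w $ k * v $ k"
      using t_le[OF True] by (metis mult.assoc mult_right_mono less_imp_le)
    also have "\<dots> = v $ k * v $ k"
      using \<open>w $ k \<noteq> 0\<close> by simp
    finally show ?thesis
      by (simp add: algebra_simps)
  next
    case False
    then have "t * (w $ k * v $ k) \<le> 0"
      using t_pos by (simp add: P_def mult_nonneg_nonpos)
    moreover have "(v $ k - t * w $ k) * v $ k = v $ k * v $ k - t * (w $ k * v $ k)"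
      by (simp add: algebra_simps)
    moreover have "0 \<le> v $ k * v $ k"
      by simp
    ultimately show ?thesis
      by linarith
  qed
  then have "conformal (v - t *\<^sub>R w) v"
    by (simp add: conformal_def)
  moreover have "(v - t *\<^sub>R w) $ i = 0" "i \<in> supp v"
    using i by (auto simp: P_def supp_def)
  ultimately show thesis
    using that t_pos by blast
qed

lemma null_vector_supported_in:
  fixes A :: "real^'n::finite^'m::finite"
  assumes "CARD('m) < card T"
  obtains w where "w \<noteq> 0" "A *v w = 0" "supp w \<subseteq> T"
proof (cases "inj_on (\<lambda>i. column i A) T")
  case False
  then obtain i i' where ii: "i \<in> T" "i' \<in> T" "i \<noteq> i'" "column i A = column i' A"
    unfolding inj_on_def by blast
  define w :: "real^'n" where "w = axis i 1 - axis i' 1"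
  have "A *v w = 0"
    using ii by (simp add: w_def matrix_vector_mult_diff_distrib matrix_vector_mult_basis)
  moreover have "w $ i = 1"
    using ii by (simp add: w_def axis_def)
  then have "w \<noteq> 0"
    by auto
  moreover have "supp w \<subseteq> T"
    using ii by (auto simp: w_def axis_def supp_def)
  ultimately show thesis
    using that by blast
next
  case True
  define C where "C = (\<lambda>i. column i A) ` T"
  have "card C = card T"
    using True by (simp add: C_def card_image)
  then have "dependent C"
    using assms by (intro dependent_biggerset) auto
  then obtain u where u: "\<exists>v\<in>C. u v \<noteq> 0" "(\<Sum>v\<in>C. u v *\<^sub>R v) = 0"
    using dependent_finite[of C] by (auto simp: C_def)
  define w :: "real^'n" where "w = (\<chi> i. if i \<in> T then u (column i A) else 0)"
  have "A *v w = (\<Sum>i\<in>UNIV. (w $ i) *s column i A)"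
    by (rule matrix_mult_sum)
  also have "\<dots> = (\<Sum>i\<in>UNIV. if i \<in> T then u (column i A) *\<^sub>R column i A else 0)"
    by (rule sum.cong) (auto simp: w_def scalar_mult_eq_scaleR)
  also have "\<dots> = (\<Sum>i\<in>T. u (column i A) *\<^sub>R column i A)"
    by (simp add: sum.If_cases)
  also have "\<dots> = (\<Sum>v\<in>C. u v *\<^sub>R v)"
    unfolding C_def by (simp only: sum.reindex[OF True] o_def)
  finally have "A *v w = 0"
    using u by simp
  moreover obtain i where "w $ i \<noteq> 0"
    using u by (auto simp: C_def w_def) (metis (lifting))
  then have "w \<noteq> 0"
    by auto
  moreover have "supp w \<subseteq> T"
    by (auto simp: w_def supp_def)
  ultimately show thesis
    using that by blast
qed

lemma null_vector_conformal_small_support: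
  fixes A :: "real^'n::finite^'m::finite"
  assumes "A *v v = 0" "v \<noteq> 0"
  shows "\<exists>w. A *v w = 0 \<and> w \<noteq> 0 \<and> card (supp w) \<le> CARD('m) + 1 \<and>
             supp w \<subseteq> supp v \<and> conformal w v"
  using assms
proof (induction "card (supp v)" arbitrary: v rule: less_induct)
  case less
  show ?case
  proof (cases "card (supp v) \<le> CARD('m) + 1")
    case True
    then show ?thesis
      using less.prems conformal_refl by blast
  next
    case False
    then have "supp v \<noteq> {}"
      by auto
    then obtain j where j: "j \<in> supp v"
      by blast
    have "CARD('m) < card (supp v - {j})"
      using False j by (simp add: card_Diff_singleton)
    then obtain w0 where w0: "w0 \<noteq> 0" "A *v w0 = 0" "supp w0 \<subseteq> supp v - {j}"
      by (rule null_vector_supported_in)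
    then obtain i where i: "i \<in> supp w0"
      using supp_eq_empty_iff[of w0] by blast
    define w where "w = (if 0 < w0 $ i * v $ i then w0 else - w0)"
    have "v $ i \<noteq> 0" "w0 $ i \<noteq> 0"
      using i w0(3) by (auto simp: supp_def)
    then have nz: "w0 $ i * v $ i \<noteq> 0"
      by simp
    have wv: "0 < w $ i * v $ i"
    proof (cases "0 < w0 $ i * v $ i")
      case True
      then show ?thesis
        by (simp add: w_def)
    next
      case False
      with nz have "w0 $ i * v $ i < 0"
        by linarith
      with False show ?thesis
        by (simp add: w_def)
    qed
    have w_supp: "supp w \<subseteq> supp v - {j}"
      using w0(3) by (auto simp: w_def supp_def)
    have "A *v w = 0"
      using w0(2) matrix_vector_mult_diff_distrib[of A 0 w0] by (simp add: w_def)
    obtain t k where t: "conformal (v - t *\<^sub>R w) v" "(v - t *\<^sub>R w) $ k = 0" "k \<in> supp v"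
      using conformal_ratio_step[OF wv] by blast
    define v' where "v' = v - t *\<^sub>R w"
    have Av': "A *v v' = 0"
      using less.prems(1) \<open>A *v w = 0\<close>
      by (simp add: v'_def matrix_vector_mult_diff_distrib matrix_vector_mult_scaleR)
    have "supp v' \<subseteq> supp v"
      using w_supp by (auto simp: v'_def supp_def)
    moreover have "k \<notin> supp v'"
      using t(2) by (simp add: v'_def supp_def)
    ultimately have card_lt: "card (supp v') < card (supp v)"
      using t(3) by (intro psubset_card_mono) auto
    have "v' $ j \<noteq> 0"
      using j w_supp by (auto simp: v'_def supp_def)
    then have "v' \<noteq> 0"
      by auto
    with less.hyps[OF card_lt Av'] obtain w' where w': "A *v w' = 0" "w' \<noteq> 0"
        "card (supp w') \<le> CARD('m) + 1" "supp w' \<subseteq> supp v'" "conformal w' v'"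
      by blast
    have "conformal v' v"
      using t(1) by (simp add: v'_def)
    moreover have "supp w' \<inter> supp v \<subseteq> supp v'"
      using w'(4) by blast
    ultimately have "conformal w' v"
      using w'(5) conformal_trans by blast
    moreover have "supp w' \<subseteq> supp v"
      using w'(4) \<open>supp v' \<subseteq> supp v\<close> by blast
    ultimately show ?thesis
      using w'(1-3) by blast
  qed
qed

lemma scaled_min_le_sum:
  fixes k r \<mu> a b c D :: real
  assumes "1 + r \<le> k" "0 \<le> r" "\<mu> \<le> 0" "\<mu> \<le> a" "\<mu> \<le> b" "r * b \<le> c" "a + c \<le> D"
  shows "k * \<mu> \<le> D"
proof -
  have "k * \<mu> \<le> (1 + r) * \<mu>"
    using assms(1,3) by (intro mult_right_mono_neg)
  also have "\<dots> = \<mu> + r * \<mu>"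
    by (simp add: algebra_simps)
  also have "r * \<mu> \<le> r * b"
    using assms(2,5) by (intro mult_left_mono)
  finally show ?thesis
    using assms(4,6,7) by linarith
qed

text \<open>Peel conformal null vectors of small support off \<open>d\<close>: each removes a coordinate from the
  support, so at most \<open>|supp d| - \<tau> + 1\<close> pieces occur, and the smallest value among them
  bounds their average.\<close>
lemma superadditive_small_support_bound:
  fixes A :: "real^'n::finite^'m::finite" and P :: "real^'n \<Rightarrow> bool" and m :: "real^'n \<Rightarrow> real"
  assumes tau: "CARD('m) + 1 \<le> \<tau>"
    and P0: "P 0" and m0: "m 0 = 0"
    and superadd: "\<And>a b. conformal a b \<Longrightarrow> P (a + b) \<Longrightarrow> P a \<and> P b \<and> m a + m b \<le> m (a + b)"
    and "A *v d = 0" "P d"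
  shows "\<exists>e. A *v e = 0 \<and> card (supp e) \<le> \<tau> \<and> P e \<and> m e \<le> 0 \<and>
             real (card (supp d) - \<tau> + 1) * m e \<le> m d"
  using assms(5,6)
proof (induction "card (supp d)" arbitrary: d rule: less_induct)
  case less
  show ?case
  proof (cases "card (supp d) \<le> \<tau>")
    case True
    show ?thesis
    proof (cases "m d \<le> 0")
      case True
      then show ?thesis
        using less.prems \<open>card (supp d) \<le> \<tau>\<close> by (intro exI[of _ d]) auto
    next
      case False
      then show ?thesis
        using P0 m0 \<open>card (supp d) \<le> \<tau>\<close> by (intro exI[of _ 0]) auto
    qed
  next
    case False
    then have "d \<noteq> 0"
      by (auto simp: supp_def)
    then obtain v where v: "A *v v = 0" "v \<noteq> 0" "card (supp v) \<le> CARD('m) + 1"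
        "supp v \<subseteq> supp d" "conformal v d"
      using null_vector_conformal_small_support[OF less.prems(1)] by blast
    then obtain j where "j \<in> supp v"
      using supp_eq_empty_iff[of v] by blast
    with v(4,5) have "0 < v $ j * d $ j"
      by (auto simp: supp_def conformal_def order_le_less)
    then obtain t i0 where t: "0 < t" "conformal (d - t *\<^sub>R v) d" "(d - t *\<^sub>R v) $ i0 = 0"
        "i0 \<in> supp d"
      by (rule conformal_ratio_step)
    define p where "p = t *\<^sub>R v"
    define r where "r = d - p"
    have "conformal p d"
      using t(1) v(5) by (simp add: p_def conformal_scaleR)
    moreover have "conformal d r"
      using t(2) by (simp add: r_def p_def conformal_commute)
    moreover have supp_p: "supp p = supp v"
      using t(1) by (simp add: p_def supp_scaleR)
    ultimately have "conformal p r"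
      using v(4) by (intro conformal_trans[of p d r]) auto
    then have Pp: "P p" "P r" "m p + m r \<le> m d"
      using superadd[of p r] less.prems(2) by (auto simp: r_def)
    have Ap: "A *v p = 0"
      using v(1) by (simp add: p_def matrix_vector_mult_scaleR)
    have Ar: "A *v r = 0"
      using Ap less.prems(1) by (simp add: r_def matrix_vector_mult_diff_distrib)
    have "supp r \<subseteq> supp d - {i0}"
      using v(4) t(3) by (auto simp: r_def p_def supp_def)
    then have card_lt: "card (supp r) < card (supp d)"
      using t(4) by (intro psubset_card_mono) auto
    from less.hyps[OF card_lt Ar Pp(2)] obtain er where er: "A *v er = 0" "card (supp er) \<le> \<tau>"
        "P er" "m er \<le> 0" "real (card (supp r) - \<tau> + 1) * m er \<le> m r"
      by blast
    have k: "1 + real (card (supp r) - \<tau> + 1) \<le> real (card (supp d) - \<tau> + 1)"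
      using card_lt False by auto
    show ?thesis
    proof (cases "m p \<le> m er")
      case True
      have "real (card (supp d) - \<tau> + 1) * m p \<le> m d"
        using True er(4,5) Pp(3) by (intro scaled_min_le_sum[OF k]) auto
      then show ?thesis
        using Ap supp_p v(3) tau Pp(1) True er(4) by (intro exI[of _ p]) auto
    next
      case False
      have "real (card (supp d) - \<tau> + 1) * m er \<le> m d"
        using False er(4,5) Pp(3) by (intro scaled_min_le_sum[OF k]) auto
      then show ?thesis
        using er by (intro exI[of _ er]) auto
    qed
  qed
qed

lemma proper_convex_ext_combination_le:
  assumes pc: "proper_convex_ext \<phi>" and u: "0 \<le> u" "u \<le> 1"
    and "\<phi> s = ereal P" "\<phi> t = ereal Q"
  shows "\<phi> ((1 - u) * s + u * t) < \<infinity> \<and>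
         real_of_ereal (\<phi> ((1 - u) * s + u * t)) \<le> (1 - u) * P + u * Q"
proof -
  have "\<phi> ((1 - u) * s + u * t) \<le> ereal (1 - u) * \<phi> s + ereal u * \<phi> t"
    using pc u unfolding proper_convex_ext_def by blast
  also have "\<dots> = ereal ((1 - u) * P + u * Q)"
    using assms(4,5) by simp
  finally show ?thesis
    using pc unfolding proper_convex_ext_def by (cases "\<phi> ((1 - u) * s + u * t)") auto
qed

text \<open>With \<open>u = a / (a + b)\<close>, both \<open>t + a\<close> and \<open>t + b\<close> are convex combinations of \<open>t\<close> and
  \<open>t + a + b\<close> with complementary weights.\<close>
lemma proper_convex_ext_same_sign_ineq:
  assumes pc: "proper_convex_ext \<phi>" and fin: "\<phi> t < \<infinity>" "\<phi> (t + a + b) < \<infinity>"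
    and ab: "0 \<le> a * b"
  shows "\<phi> (t + a) < \<infinity> \<and> \<phi> (t + b) < \<infinity> \<and>
     real_of_ereal (\<phi> (t + a)) + real_of_ereal (\<phi> (t + b))
       \<le> real_of_ereal (\<phi> t) + real_of_ereal (\<phi> (t + a + b))"
proof (cases "a = 0 \<or> b = 0")
  case True
  then show ?thesis
    using fin by (auto simp: add.commute)
next
  case False
  define P where "P = real_of_ereal (\<phi> t)"
  define Q where "Q = real_of_ereal (\<phi> (t + a + b))"
  have not_minf: "\<phi> y \<noteq> -\<infinity>" for y
    using pc unfolding proper_convex_ext_def by blast
  have P: "\<phi> t = ereal P"
    using fin(1) not_minf[of t] unfolding P_def by (cases "\<phi> t") auto
  have Q: "\<phi> (t + a + b) = ereal Q"
    using fin(2) not_minf[of "t + a + b"] unfolding Q_def by (cases "\<phi> (t + a + b)") auto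
  have "0 < a * b"
    using ab False by (simp add: order_le_less)
  then have "a + b \<noteq> 0"
    by (auto simp: zero_less_mult_iff)
  define u where "u = a / (a + b)"
  have u01: "0 \<le> u" "u \<le> 1" "1 - u = b / (a + b)"
    using \<open>0 < a * b\<close> \<open>a + b \<noteq> 0\<close>
    by (auto simp: u_def zero_less_mult_iff divide_simps)
  have "u * (a + b) = a"
    using \<open>a + b \<noteq> 0\<close> by (simp add: u_def)
  then have "(1 - u) * t + u * (t + a + b) = t + a"
    by (simp add: algebra_simps)
  then have A: "\<phi> (t + a) < \<infinity> \<and> real_of_ereal (\<phi> (t + a)) \<le> (1 - u) * P + u * Q"
    using proper_convex_ext_combination_le[OF pc u01(1,2) P Q] by simp
  have "(1 - u) * (a + b) = b"
    using \<open>a + b \<noteq> 0\<close> u01(3) by simp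
  then have "(1 - (1 - u)) * t + (1 - u) * (t + a + b) = t + b"
    by (simp add: algebra_simps)
  then have B: "\<phi> (t + b) < \<infinity> \<and> real_of_ereal (\<phi> (t + b)) \<le> (1 - (1 - u)) * P + (1 - u) * Q"
    using proper_convex_ext_combination_le[OF pc _ _ P Q, of "1 - u"] u01 by simp
  show ?thesis
    using A B by (simp add: P_def Q_def algebra_simps)
qed

definition hsep_real :: "('n::finite \<Rightarrow> real \<Rightarrow> ereal) \<Rightarrow> real^'n \<Rightarrow> real" where
  "hsep_real hi y = (\<Sum>i\<in>UNIV. real_of_ereal (hi i (y $ i)))"

lemma hsep_less_infinity_iff: "hsep hi y < \<infinity> \<longleftrightarrow> (\<forall>i. hi i (y $ i) < \<infinity>)"
  unfolding hsep_def less_top[symmetric, unfolded top_ereal_def] by (simp add: sum_Pinfty)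

lemma hsep_eq_ereal_hsep_real:
  assumes "\<And>i. proper_convex_ext (hi i)" "hsep hi y < \<infinity>"
  shows "hsep hi y = ereal (hsep_real hi y)"
proof -
  have "hi i (y $ i) = ereal (real_of_ereal (hi i (y $ i)))" for i
  proof -
    have "hi i (y $ i) < \<infinity>" "hi i (y $ i) \<noteq> -\<infinity>"
      using assms hsep_less_infinity_iff[of hi y] unfolding proper_convex_ext_def by blast+
    then show ?thesis
      by (cases "hi i (y $ i)") auto
  qed
  then have "hsep hi y = (\<Sum>i\<in>UNIV. ereal (real_of_ereal (hi i (y $ i))))"
    unfolding hsep_def by (intro sum.cong) auto
  then show ?thesis
    by (simp add: hsep_real_def)
qed

lemma hsep_same_sign_ineq:
  assumes pc: "\<And>i. proper_convex_ext (hi i)"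
    and fin: "hsep hi x < \<infinity>" "hsep hi (x + a + b) < \<infinity>" and ab: "conformal a b"
  shows "hsep hi (x + a) < \<infinity> \<and> hsep hi (x + b) < \<infinity> \<and>
         hsep_real hi (x + a) + hsep_real hi (x + b) \<le> hsep_real hi x + hsep_real hi (x + a + b)"
proof -
  have coord: "hi i (x $ i + a $ i) < \<infinity> \<and> hi i (x $ i + b $ i) < \<infinity> \<and>
      real_of_ereal (hi i (x $ i + a $ i)) + real_of_ereal (hi i (x $ i + b $ i))
        \<le> real_of_ereal (hi i (x $ i)) + real_of_ereal (hi i (x $ i + a $ i + b $ i))" for i
    using fin ab hsep_less_infinity_iff[of hi]
    by (intro proper_convex_ext_same_sign_ineq[OF pc]) (auto simp: conformal_def)
  then have "hsep hi (x + a) < \<infinity>" "hsep hi (x + b) < \<infinity>"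
    unfolding hsep_less_infinity_iff by auto
  moreover have "hsep_real hi (x + a) + hsep_real hi (x + b) \<le> hsep_real hi x + hsep_real hi (x + a + b)"
    unfolding hsep_real_def sum.distrib[symmetric] using coord by (intro sum_mono) simp
  ultimately show ?thesis
    by blast
qed

lemma norm_add_power2_ge_conformal:
  fixes a b :: "real^'n::finite"
  assumes "conformal a b"
  shows "(norm a)\<^sup>2 + (norm b)\<^sup>2 \<le> (norm (a + b))\<^sup>2"
proof -
  have "0 \<le> a \<bullet> b"
    using assms unfolding inner_vec_def conformal_def by (intro sum_nonneg) simp
  moreover have "(norm (a + b))\<^sup>2 = (norm a)\<^sup>2 + (norm b)\<^sup>2 + 2 * (a \<bullet> b)"
    by (simp add: power2_norm_eq_inner inner_add_left inner_add_right inner_commute)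
  ultimately show ?thesis
    by linarith
qed

definition model_real :: "(real^'n \<Rightarrow> real^'n) \<Rightarrow> ('n::finite \<Rightarrow> real \<Rightarrow> ereal) \<Rightarrow> real
                          \<Rightarrow> real^'n \<Rightarrow> real^'n \<Rightarrow> real" where
  "model_real g hi L x d = g x \<bullet> d + L / 2 * (norm d)\<^sup>2 + hsep_real hi (x + d) - hsep_real hi x"

lemma model_real_zero [simp]: "model_real g hi L x 0 = 0"
  by (simp add: model_real_def)

lemma model_eq_ereal_model_real:
  assumes "\<And>i. proper_convex_ext (hi i)" "hsep hi x < \<infinity>" "hsep hi (x + d) < \<infinity>"
  shows "model g (hsep hi) L x d = ereal (model_real g hi L x d)"
  using hsep_eq_ereal_hsep_real[OF assms(1,2)] hsep_eq_ereal_hsep_real[OF assms(1,3)]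
  by (simp add: model_def model_real_def)

lemma model_eq_infinity:
  assumes "\<And>i. proper_convex_ext (hi i)" "hsep hi x < \<infinity>" "\<not> hsep hi (x + d) < \<infinity>"
  shows "model g (hsep hi) L x d = \<infinity>"
proof -
  have "hsep hi (x + d) = \<infinity>"
    using assms(3) by (simp add: less_top[symmetric, unfolded top_ereal_def])
  then show ?thesis
    using hsep_eq_ereal_hsep_real[OF assms(1,2)] by (simp add: model_def)
qed

lemma model_real_same_sign_superadditive:
  assumes pc: "\<And>i. proper_convex_ext (hi i)" and L: "0 \<le> L"
    and fin: "hsep hi x < \<infinity>" "hsep hi (x + (a + b)) < \<infinity>" and ab: "conformal a b"
  shows "hsep hi (x + a) < \<infinity> \<and> hsep hi (x + b) < \<infinity> \<and>
         model_real g hi L x a + model_real g hi L x b \<le> model_real g hi L x (a + b)"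
proof -
  have h: "hsep hi (x + a) < \<infinity> \<and> hsep hi (x + b) < \<infinity> \<and>
      hsep_real hi (x + a) + hsep_real hi (x + b) \<le> hsep_real hi x + hsep_real hi (x + a + b)"
    using hsep_same_sign_ineq[OF pc fin(1) _ ab] fin(2) by (simp add: add.assoc)
  have "L / 2 * ((norm a)\<^sup>2 + (norm b)\<^sup>2) \<le> L / 2 * (norm (a + b))\<^sup>2"
    using norm_add_power2_ge_conformal[OF ab] L by (intro mult_left_mono) auto
  then show ?thesis
    using h by (simp add: model_real_def inner_add_right algebra_simps add.assoc)
qed

lemma block_minimizer_model_bound:
  fixes A :: "real^'n::finite^'m::finite"
  assumes tau: "CARD('m) + 1 \<le> \<tau>" "\<tau> \<le> CARD('n)"
    and pc: "\<And>i. proper_convex_ext (hi i)" and L: "0 \<le> L" and hx: "hsep hi x < \<infinity>"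
    and min: "\<And>bb e. card bb = \<tau> \<Longrightarrow> supp e \<subseteq> bb \<Longrightarrow> A *v e = 0 \<Longrightarrow>
                model g (hsep hi) L x d \<le> model g (hsep hi) L x e"
  shows "hsep hi (x + d) < \<infinity>"
    and "ereal (real (CARD('n) - \<tau> + 1) * model_real g hi L x d)
           \<le> Inf {model g (hsep hi) L x e | e. A *v e = 0}"
proof -
  define N where "N = real (CARD('n) - \<tau> + 1)"
  have block: "\<exists>bb. card bb = \<tau> \<and> S \<subseteq> bb" if "card S \<le> \<tau>" for S :: "'n set"
    using exists_subset_between[of S \<tau> UNIV] that tau(2) by auto
  have model_zero: "model g (hsep hi) L x 0 = 0"
    using model_eq_ereal_model_real[OF pc hx, of 0] hx by (simp add: zero_ereal_def)
  obtain bb0 :: "'n set" where "card bb0 = \<tau>"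
    using block[of "{}"] by auto
  then have "model g (hsep hi) L x d \<le> 0"
    using min[of bb0 0] model_zero by simp
  then show fin: "hsep hi (x + d) < \<infinity>"
    using model_eq_infinity[OF pc hx, of d] by force
  have superadd: "hsep hi (x + a) < \<infinity> \<and> hsep hi (x + b) < \<infinity> \<and>
      model_real g hi L x a + model_real g hi L x b \<le> model_real g hi L x (a + b)"
    if "conformal a b" "hsep hi (x + (a + b)) < \<infinity>" for a b
    using model_real_same_sign_superadditive[OF pc L hx that(2,1)] .
  have "ereal (N * model_real g hi L x d) \<le> model g (hsep hi) L x e" if "A *v e = 0" for e
  proof (cases "hsep hi (x + e) < \<infinity>")
    case False
    then show ?thesis
      using model_eq_infinity[OF pc hx] by simp
  next
    case True
    have "\<exists>e'. A *v e' = 0 \<and> card (supp e') \<le> \<tau> \<and> hsep hi (x + e') < \<infinity> \<and>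
        model_real g hi L x e' \<le> 0 \<and>
        real (card (supp e) - \<tau> + 1) * model_real g hi L x e' \<le> model_real g hi L x e"
      by (rule superadditive_small_support_bound[OF tau(1) _ _ superadd that True]) (use hx in auto)
    then obtain e' where e': "A *v e' = 0" "card (supp e') \<le> \<tau>" "hsep hi (x + e') < \<infinity>"
        "model_real g hi L x e' \<le> 0"
        "real (card (supp e) - \<tau> + 1) * model_real g hi L x e' \<le> model_real g hi L x e"
      by blast
    obtain bb where "card bb = \<tau>" "supp e' \<subseteq> bb"
      using block e'(2) by blast
    then have "model_real g hi L x d \<le> model_real g hi L x e'"
      using min[of bb e'] e'(1) model_eq_ereal_model_real[OF pc hx] fin e'(3) by simp
    then have "N * model_real g hi L x d \<le> N * model_real g hi L x e'"
      by (intro mult_left_mono) (auto simp: N_def)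
    also have "\<dots> \<le> real (card (supp e) - \<tau> + 1) * model_real g hi L x e'"
    proof (rule mult_right_mono_neg[OF _ e'(4)])
      have "card (supp e) \<le> CARD('n)"
        by (rule card_mono) auto
      then show "real (card (supp e) - \<tau> + 1) \<le> N"
        unfolding N_def by linarith
    qed
    finally show ?thesis
      using e'(5) model_eq_ereal_model_real[OF pc hx True] by simp
  qed
  then show "ereal (N * model_real g hi L x d) \<le> Inf {model g (hsep hi) L x e | e. A *v e = 0}"
    by (auto intro!: Inf_greatest)
qed

lemma norm_eq_L2_set_supp:
  fixes e :: "real^'n::finite"
  assumes "supp e \<subseteq> bb"
  shows "norm e = L2_set (\<lambda>i. e $ i) bb"
proof -
  have "norm e = L2_set (\<lambda>i. e $ i) UNIV"
    by (simp add: norm_vec_def L2_set_def)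
  also have "\<dots> = L2_set (\<lambda>i. e $ i) bb"
    unfolding L2_set_def
    by (rule arg_cong[where f = sqrt], rule sum.mono_neutral_right)
       (use assms in \<open>auto simp: supp_def\<close>)
  finally show ?thesis .
qed

lemma inner_le_L2_set_supp:
  fixes e z :: "real^'n::finite"
  assumes "supp e \<subseteq> bb"
  shows "z \<bullet> e \<le> L2_set (\<lambda>i. z $ i) bb * norm e"
proof -
  have "z \<bullet> e = (\<Sum>i\<in>UNIV. z $ i * e $ i)"
    by (simp add: inner_vec_def)
  also have "\<dots> = (\<Sum>i\<in>bb. z $ i * e $ i)"
    by (rule sum.mono_neutral_right) (use assms in \<open>auto simp: supp_def\<close>)
  also have "\<dots> \<le> (\<Sum>i\<in>bb. \<bar>z $ i\<bar> * \<bar>e $ i\<bar>)"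
    by (rule sum_mono) (simp add: abs_mult[symmetric])
  also have "\<dots> \<le> L2_set (\<lambda>i. z $ i) bb * L2_set (\<lambda>i. e $ i) bb"
    by (rule L2_set_mult_ineq)
  finally show ?thesis
    using norm_eq_L2_set_supp[OF assms] by simp
qed

text \<open>By Cauchy-Schwarz on the block, \<open>t \<mapsto> f (y + t e) - t \<nabla>f(y)\<^sup>T e - L t\<^sup>2 \<parallel>e\<parallel>\<^sup>2 / 2\<close>
  is nonincreasing on \<open>[0, 1]\<close>.\<close>
lemma block_descent:
  fixes f :: "real^'n::finite \<Rightarrow> real" and g :: "real^'n \<Rightarrow> real^'n"
  assumes grad: "\<And>y. GDERIV f y :> g y"
    and lip: "\<And>t. 0 \<le> t \<Longrightarrow> t \<le> 1 \<Longrightarrow>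
                L2_set (\<lambda>i. g (y + t *\<^sub>R e) $ i - g y $ i) bb \<le> L * norm (t *\<^sub>R e)"
    and supp: "supp e \<subseteq> bb"
  shows "f (y + e) \<le> f y + g y \<bullet> e + L / 2 * (norm e)\<^sup>2"
proof -
  define \<phi> where "\<phi> = (\<lambda>t. f (y + t *\<^sub>R e) - t * (g y \<bullet> e) - L / 2 * t\<^sup>2 * (norm e)\<^sup>2)"
  have "((\<lambda>t. f (y + t *\<^sub>R e)) has_real_derivative (g (y + t *\<^sub>R e) \<bullet> e)) (at t)" for t
  proof -
    have "((\<lambda>t. y + t *\<^sub>R e) has_derivative (\<lambda>s. s *\<^sub>R e)) (at t)"
      by (auto intro!: derivative_eq_intros)
    from has_derivative_compose[OF this grad[unfolded gderiv_def]]
    show ?thesis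
      unfolding has_field_derivative_def
      by (rule has_derivative_eq_rhs) (auto simp: fun_eq_iff inner_commute)
  qed
  then have deriv: "(\<phi> has_real_derivative (g (y + t *\<^sub>R e) \<bullet> e - g y \<bullet> e - L * t * (norm e)\<^sup>2)) (at t)"
    for t
    unfolding \<phi>_def by (auto intro!: derivative_eq_intros simp: power2_eq_square)
  have slope: "g (y + t *\<^sub>R e) \<bullet> e - g y \<bullet> e - L * t * (norm e)\<^sup>2 \<le> 0" if "0 \<le> t" "t \<le> 1" for t
  proof -
    have "g (y + t *\<^sub>R e) \<bullet> e - g y \<bullet> e = (g (y + t *\<^sub>R e) - g y) \<bullet> e"
      by (simp add: inner_diff_left)
    also have "\<dots> \<le> L2_set (\<lambda>i. (g (y + t *\<^sub>R e) - g y) $ i) bb * norm e"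
      by (rule inner_le_L2_set_supp[OF supp])
    also have "\<dots> \<le> L * norm (t *\<^sub>R e) * norm e"
      using lip[OF that] by (intro mult_right_mono) auto
    also have "\<dots> = L * t * (norm e)\<^sup>2"
      using that by (simp add: power2_eq_square)
    finally show ?thesis
      by simp
  qed
  have "\<phi> 1 \<le> \<phi> 0"
  proof (rule DERIV_nonpos_imp_nonincreasing[of 0 1])
    fix t :: real
    assume "0 \<le> t" "t \<le> 1"
    then show "\<exists>y. DERIV \<phi> t :> y \<and> y \<le> 0"
      using deriv slope by blast
  qed simp
  then show ?thesis
    by (simp add: \<phi>_def)
qed

lemma nonneg_geometric_decay:
  fixes E :: "nat \<Rightarrow> real"
  assumes nonneg: "\<And>k. 0 \<le> E k" and step: "\<And>k. E (Suc k) \<le> \<rho> * E k"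
  shows "E k \<le> \<rho> ^ k * E 0"
proof (cases "0 \<le> \<rho>")
  case True
  show ?thesis
  proof (induction k)
    case (Suc k)
    have "E (Suc k) \<le> \<rho> * E k"
      by (rule step)
    also have "\<dots> \<le> \<rho> * (\<rho> ^ k * E 0)"
      using Suc True by (intro mult_left_mono)
    finally show ?case
      by (simp add: algebra_simps)
  qed simp
next
  case False
  text \<open>A negative rate forces the whole sequence to vanish.\<close>
  have "\<rho> * E j \<le> 0" for j
    using False nonneg[of j] by (simp add: mult_nonpos_nonneg)
  then have "E (Suc j) = 0" for j
    using step[of j] nonneg[of "Suc j"] by (meson order_antisym order_trans)
  moreover have "0 \<le> \<rho> * E 0"
    using step[of 0] nonneg[of "Suc 0"] by linarith
  then have "E 0 = 0"
    using False nonneg[of 0] by (simp add: zero_le_mult_iff)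
  ultimately show ?thesis
    by (cases k) simp_all
qed

lemma linear_rate_from_model_decrease:
  fixes L N md I \<mu> E E' :: real
  assumes "0 < L" "0 < N" "N * md \<le> I" "\<mu> * E \<le> - L * I" "E' \<le> E + md"
  shows "E' \<le> (1 - \<mu> / (L * N)) * E"
proof -
  have "L * (N * md) \<le> L * I"
    using assms(1,3) by (intro mult_left_mono) auto
  also have "\<dots> \<le> - (\<mu> * E)"
    using assms(4) by linarith
  finally have "md \<le> - (\<mu> * E) / (L * N)"
    using assms(1,2) by (simp add: field_simps)
  moreover have "(1 - \<mu> / (L * N)) * E = E - \<mu> * E / (L * N)"
    using assms(1,2) by (simp add: field_simps)
  ultimately show ?thesis
    using assms(5) by simp
qed

locale gsq_problem =
  fixes A :: "real^'n::finite^'m::finite" and c :: "real^'m" and \<tau> :: nat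
    and f :: "real^'n \<Rightarrow> real" and g :: "real^'n \<Rightarrow> real^'n" and hi :: "'n \<Rightarrow> real \<Rightarrow> ereal"
    and L \<mu> :: real and Fstar :: ereal
  assumes tau_lo: "CARD('m) + 1 \<le> \<tau>" and tau_hi: "\<tau> \<le> CARD('n)"
    and grad: "\<And>y. GDERIV f y :> g y"
    and hi_pc: "\<And>i. proper_convex_ext (hi i)"
    and L_pos: "0 < L" and mu_pos: "0 < \<mu>"
    and lip: "\<And>y bb e. A *v y = c \<Longrightarrow> card bb = \<tau> \<Longrightarrow> supp e \<subseteq> bb \<Longrightarrow> A *v e = 0 \<Longrightarrow>
               L2_set (\<lambda>i. g (y + e) $ i - g y $ i) bb \<le> L * norm e"
    and Fstar_eq: "Fstar = Inf {ereal (f y) + hsep hi y | y. A *v y = c}"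
    and PL: "\<And>y. A *v y = c \<Longrightarrow> hsep hi y < \<infinity> \<Longrightarrow>
               ereal \<mu> * (ereal (f y) + hsep hi y - Fstar)
                 \<le> ereal (- L) * Inf {model g (hsep hi) L y e | e. A *v e = 0}"
begin

definition gsq_step :: "real^'n \<Rightarrow> real^'n \<Rightarrow> bool" where
  "gsq_step x d \<longleftrightarrow> (\<exists>bb. card bb = \<tau> \<and> supp d \<subseteq> bb) \<and> A *v d = 0 \<and>
     (\<forall>bb e. card bb = \<tau> \<longrightarrow> supp e \<subseteq> bb \<longrightarrow> A *v e = 0 \<longrightarrow>
        model g (hsep hi) L x d \<le> model g (hsep hi) L x e)"

definition gap :: "real^'n \<Rightarrow> real" where
  "gap y = f y + hsep_real hi y - real_of_ereal Fstar"

lemma gsq_step_feasible: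
  assumes "A *v x = c" "hsep hi x < \<infinity>" "gsq_step x d"
  shows "A *v (x + d) = c" "hsep hi (x + d) < \<infinity>"
  using assms L_pos block_minimizer_model_bound(1)[OF tau_lo tau_hi hi_pc, where L=L and x=x and g=g and A=A and d=d]
  by (auto simp: gsq_step_def matrix_vector_right_distrib)

lemma model_inf_lower_bound:
  assumes "hsep hi x < \<infinity>" "gsq_step x d"
  obtains I where "Inf {model g (hsep hi) L x e | e. A *v e = 0} = ereal I"
    "real (CARD('n) - \<tau> + 1) * model_real g hi L x d \<le> I"
proof -
  let ?I = "Inf {model g (hsep hi) L x e | e. A *v e = 0}"
  have lower: "ereal (real (CARD('n) - \<tau> + 1) * model_real g hi L x d) \<le> ?I"
    using assms L_pos block_minimizer_model_bound(2)[OF tau_lo tau_hi hi_pc, where L=L and x=x and g=g and A=A and d=d]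
    by (auto simp: gsq_step_def)
  have "?I \<le> model g (hsep hi) L x 0"
    by (intro Inf_lower) auto
  also have "\<dots> = 0"
    using model_eq_ereal_model_real[OF hi_pc assms(1), of 0] assms(1) by (simp add: zero_ereal_def)
  finally show thesis
    using lower that by (cases ?I) auto
qed

lemma Fstar_le: "A *v y = c \<Longrightarrow> Fstar \<le> ereal (f y) + hsep hi y"
  unfolding Fstar_eq by (intro Inf_lower) auto

lemma Fstar_finite:
  assumes "A *v x = c" "hsep hi x < \<infinity>" "gsq_step x d"
  shows "\<bar>Fstar\<bar> \<noteq> \<infinity>"
proof -
  obtain I where I: "Inf {model g (hsep hi) L x e | e. A *v e = 0} = ereal I"
    using model_inf_lower_bound[OF assms(2,3)] by blast
  have Fx: "ereal (f x) + hsep hi x = ereal (f x + hsep_real hi x)"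
    using hsep_eq_ereal_hsep_real[OF hi_pc assms(2)] by simp
  have "Fstar \<noteq> \<infinity>"
    using Fstar_le[OF assms(1)] Fx by auto
  moreover have "Fstar \<noteq> -\<infinity>"
    using PL[OF assms(1,2)] I Fx mu_pos by auto
  ultimately show ?thesis
    by auto
qed

lemma gap_eq:
  assumes "hsep hi y < \<infinity>" "\<bar>Fstar\<bar> \<noteq> \<infinity>"
  shows "ereal (f y) + hsep hi y - Fstar = ereal (gap y)"
proof -
  obtain r where "Fstar = ereal r"
    using assms(2) by (cases Fstar) auto
  then show ?thesis
    unfolding gap_def using hsep_eq_ereal_hsep_real[OF hi_pc assms(1)] by simp
qed

lemma gap_nonneg:
  assumes "A *v y = c" "hsep hi y < \<infinity>" "\<bar>Fstar\<bar> \<noteq> \<infinity>"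
  shows "0 \<le> gap y"
proof -
  obtain r where r: "Fstar = ereal r"
    using assms(3) by (cases Fstar) auto
  have "Fstar \<le> ereal (f y + hsep_real hi y)"
    using Fstar_le[OF assms(1)] hsep_eq_ereal_hsep_real[OF hi_pc assms(2)] by simp
  then show ?thesis
    unfolding gap_def using r by simp
qed

lemma gsq_step_contraction:
  assumes x: "A *v x = c" "hsep hi x < \<infinity>" and d: "gsq_step x d"
  shows "gap (x + d) \<le> (1 - \<mu> / (L * real (CARD('n) - \<tau> + 1))) * gap x"
proof -
  obtain bb where bb: "card bb = \<tau>" "supp d \<subseteq> bb" and null: "A *v d = 0"
    using d by (auto simp: gsq_step_def)
  obtain I where I: "Inf {model g (hsep hi) L x e | e. A *v e = 0} = ereal I"
      and model_le: "real (CARD('n) - \<tau> + 1) * model_real g hi L x d \<le> I"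
    using model_inf_lower_bound[OF x(2) d] by blast
  have fin: "\<bar>Fstar\<bar> \<noteq> \<infinity>"
    by (rule Fstar_finite[OF x d])
  have "\<mu> * gap x \<le> - L * I"
    using PL[OF x] gap_eq[OF x(2) fin] I by simp
  moreover have "f (x + d) \<le> f x + g x \<bullet> d + L / 2 * (norm d)\<^sup>2"
  proof (rule block_descent[OF grad _ bb(2)])
    fix t :: real
    have "supp (t *\<^sub>R d) \<subseteq> bb" "A *v (t *\<^sub>R d) = 0"
      using bb(2) null by (auto simp: supp_def matrix_vector_mult_scaleR)
    then show "L2_set (\<lambda>i. g (x + t *\<^sub>R d) $ i - g x $ i) bb \<le> L * norm (t *\<^sub>R d)"
      using lip[OF x(1) bb(1)] by blast
  qed
  then have "gap (x + d) \<le> gap x + model_real g hi L x d"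
    by (simp add: gap_def model_real_def)
  ultimately show ?thesis
    using L_pos model_le by (intro linear_rate_from_model_decrease) auto
qed

end

theorem propositionD2:
  fixes A :: "real^'n::finite^'m::finite"
    and c :: "real^'m"
    and \<tau> :: nat
    and f :: "real^'n \<Rightarrow> real"
    and g :: "real^'n \<Rightarrow> real^'n"
    and hi :: "'n \<Rightarrow> real \<Rightarrow> ereal"
    and L2 \<mu>2 :: real
    and Fstar :: ereal
    and x d :: "nat \<Rightarrow> real^'n"
    and b :: "nat \<Rightarrow> 'n set"
  defines "\<B> \<equiv> {bb :: 'n set. card bb = \<tau>}"
      and "F \<equiv> (\<lambda>y. ereal (f y) + hsep hi y)"
  assumes rank_A: "rank A = CARD('m)"
    and tau_lo: "CARD('m) + 1 \<le> \<tau>"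
    and tau_hi: "\<tau> \<le> CARD('n)"
    and grad: "\<And>y. GDERIV f y :> g y"
    and hi_pc: "\<And>i. proper_convex_ext (hi i)"
    and L2_pos: "L2 > 0"
    and lip: "\<And>y bb e. A *v y = c \<Longrightarrow> bb \<in> \<B> \<Longrightarrow> supp e \<subseteq> bb \<Longrightarrow> A *v e = 0 \<Longrightarrow>
               L2_set (\<lambda>i. g (y + e) $ i - g y $ i) bb \<le> L2 * norm e"
    and Fstar_def: "Fstar = Inf {F y | y. A *v y = c}"
    and mu2_pos: "\<mu>2 > 0"
    and PL: "\<And>y. A *v y = c \<Longrightarrow> hsep hi y < \<infinity> \<Longrightarrow>
               ereal (- L2) * Inf {model g (hsep hi) L2 y e | e. A *v e = 0}
                 \<ge> ereal \<mu>2 * (F y - Fstar)"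
    and x0_feas: "A *v x 0 = c"
    and x0_dom: "hsep hi (x 0) < \<infinity>"
    and step: "\<And>k. x (Suc k) = x k + d k"
    and b_in: "\<And>k. b k \<in> \<B>"
    and d_supp: "\<And>k. supp (d k) \<subseteq> b k"
    and d_null: "\<And>k. A *v d k = 0"
    and gsq: "\<And>k bb e. bb \<in> \<B> \<Longrightarrow> supp e \<subseteq> bb \<Longrightarrow> A *v e = 0 \<Longrightarrow>
               model g (hsep hi) L2 (x k) (d k) \<le> model g (hsep hi) L2 (x k) e"
  shows "\<forall>k. F (x k) - Fstar
           \<le> ereal ((1 - \<mu>2 / (L2 * real (CARD('n) - \<tau> + 1))) ^ k) * (F (x 0) - Fstar)"
proof -
  interpret gsq_problem A c \<tau> f g hi L2 \<mu>2 Fstar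
    using tau_lo tau_hi grad hi_pc L2_pos mu2_pos lip Fstar_def PL
    by unfold_locales (auto simp: \<B>_def F_def)
  have gsq_step: "gsq_step (x k) (d k)" for k
    using b_in d_supp d_null gsq unfolding gsq_step_def \<B>_def by blast
  have feasible: "A *v x k = c \<and> hsep hi (x k) < \<infinity>" for k
  proof (induction k)
    case 0
    show ?case
      using x0_feas x0_dom by blast
  next
    case (Suc k)
    then show ?case
      unfolding step using gsq_step_feasible[OF _ _ gsq_step] by blast
  qed
  have fin: "\<bar>Fstar\<bar> \<noteq> \<infinity>"
    by (rule Fstar_finite[OF x0_feas x0_dom gsq_step])
  have decay: "gap (x k) \<le> (1 - \<mu>2 / (L2 * real (CARD('n) - \<tau> + 1))) ^ k * gap (x 0)" for k
  proof (rule nonneg_geometric_decay)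
    show "0 \<le> gap (x j)" for j
      using feasible[of j] gap_nonneg[OF _ _ fin] by blast
    show "gap (x (Suc j)) \<le> (1 - \<mu>2 / (L2 * real (CARD('n) - \<tau> + 1))) * gap (x j)" for j
      unfolding step using feasible[of j] gsq_step_contraction[OF _ _ gsq_step] by blast
  qed
  have gap_F: "F (x k) - Fstar = ereal (gap (x k))" for k
    unfolding F_def using feasible[of k] gap_eq[OF _ fin] by blast
  show ?thesis
    using decay by (simp add: gap_F)
qed

end
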